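(* Let $f_{\theta}:\mathbb{R}^d\to\mathbb{R}$ be differentiable, let $\mathbf{x}_1,\ldots,\mathbf{x}_n\in\mathbb{R}^d$ be data points with coordinates $\mathbf{x}_i=(x_{1i},\ldots,x_{di})$, and fix $j\in\{1,\ldots,d\}$ with $\sum_{i=1}^n x_{ji}^2>0$. Suppose $f_\theta$ is weakly invariant to the $j$-th feature with constant $C>0$, i.e. $\left|\frac{\partial f_\theta(\mathbf{x})}{\partial x_j}\right|<C$ for all $\mathbf{x}\in\mathbb{R}^d$. Consider the MIND objective with gating transformation and inner-product similarity regularization, $$L(\mathbf{g})=\frac{1}{n}\sum_{i=1}^n\Big[\,\big|f_\theta(\mathbf{x}_i)-f_\theta(\mathbf{g}\odot\mathbf{x}_i)\big|+\lambda\,(\mathbf{g}\odot\mathbf{x}_i)^{\top}\mathbf{x}_i\Big],\qquad \mathbf{g}\in[0,1]^d .$$ If $\lambda\geq C\,\frac{\sum_{i=1}^n|x_{ji}|}{\sum_{i=1}^n x_{ji}^2}$, then every global minimizer $\mathbf{g}^*$ of $L$ over $[0,1]^d$ satisfies $g^*_j=0$.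
   Context: $\odot$ denotes the element-wise (Hadamard) product. The vector $\mathbf{g}\in[0,1]^d$ parametrizes the gating transformation $\mathbf{x}\mapsto\mathbf{g}\odot\mathbf{x}$; its entries $g_j$ are called MIND scores. $f_\theta$ is a fixed (pre-trained) prediction function and $\lambda>0$ is the regularization coefficient. *)

theory Defs
  imports "HOL-Analysis.Analysis"
begin

definition hadamard :: "real^'d \<Rightarrow> real^'d \<Rightarrow> real^'d" (infixl "\<odot>" 70) where
  "g \<odot> x = (\<chi> k. g $ k * x $ k)"

definition partial_deriv :: "(real^'d \<Rightarrow> real) \<Rightarrow> 'd \<Rightarrow> real^'d \<Rightarrow> real" where
  "partial_deriv f j x = deriv (\<lambda>t. f (x + t *\<^sub>R axis j 1)) 0"

definition unit_cube :: "(real^'d) set" where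
  "unit_cube = {g. \<forall>k. 0 \<le> g $ k \<and> g $ k \<le> 1}"

definition MIND_loss :: "(real^'d \<Rightarrow> real) \<Rightarrow> real \<Rightarrow> nat \<Rightarrow> (nat \<Rightarrow> real^'d) \<Rightarrow> real^'d \<Rightarrow> real" where
  "MIND_loss f lam n x g =
     (1 / real n) * (\<Sum>i=1..n. \<bar>f (x i) - f (g \<odot> x i)\<bar> + lam * ((g \<odot> x i) \<bullet> x i))"

end

theory Submission
  imports Defs
begin

text \<open>Removing feature j from a gate g with g_j = a > 0 changes the prediction at a sample x
  by less than C a |x_j| (mean value theorem along the j-th axis), while it lowers the
  regularizer by exactly \<lambda> a x_j^2. Summing over the samples, the choice of \<lambda> makes the
  total change negative, and strictly so because some x_j is nonzero; hence a minimizer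
  cannot have g_j > 0.\<close>

lemma abs_diff_less_of_abs_deriv_less:
  fixes \<phi> :: "real \<Rightarrow> real"
  assumes diff: "\<And>s. \<phi> differentiable (at s)"
    and bound: "\<And>s. \<bar>deriv \<phi> s\<bar> < C"
    and "s \<noteq> t"
  shows "\<bar>\<phi> t - \<phi> s\<bar> < C * \<bar>t - s\<bar>"
proof -
  have DERIV: "DERIV \<phi> u :> deriv \<phi> u" for u
    using diff DERIV_deriv_iff_real_differentiable by blast
  have less: "\<bar>\<phi> v - \<phi> u\<bar> < C * \<bar>v - u\<bar>" if "u < v" for u v
  proof -
    obtain z where "\<phi> v - \<phi> u = (v - u) * deriv \<phi> z"
      using MVT2[OF \<open>u < v\<close>, of \<phi> "deriv \<phi>"] DERIV by blast
    then have "\<bar>\<phi> v - \<phi> u\<bar> = \<bar>v - u\<bar> * \<bar>deriv \<phi> z\<bar>" by (simp add: abs_mult)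
    also have "\<dots> < \<bar>v - u\<bar> * C" using bound[of z] \<open>u < v\<close> by simp
    finally show ?thesis by (simp add: mult.commute)
  qed
  show ?thesis
    using less[of s t] less[of t s] \<open>s \<noteq> t\<close> by (cases "s < t") (auto simp: abs_minus_commute)
qed

lemma deriv_along_axis:
  fixes f :: "real^'d \<Rightarrow> real"
  assumes diff: "\<And>y. f differentiable (at y)"
  shows "(\<lambda>s. f (y + s *\<^sub>R axis j 1)) differentiable (at s)"
    and "deriv (\<lambda>s. f (y + s *\<^sub>R axis j 1)) s = partial_deriv f j (y + s *\<^sub>R axis j 1)"
proof -
  let ?\<phi> = "\<lambda>s. f (y + s *\<^sub>R axis j 1)"
  have "(\<lambda>s::real. y + s *\<^sub>R axis j 1) differentiable (at s)" for s
    by (intro derivative_intros)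
  then have "(f \<circ> (\<lambda>s. y + s *\<^sub>R axis j 1)) differentiable (at s)" for s
    using differentiable_chain_at diff by blast
  then show phi_diff: "?\<phi> differentiable (at s)" for s by (simp add: o_def)
  have "DERIV (\<lambda>t. ?\<phi> (t + s)) 0 :> deriv ?\<phi> s"
    using phi_diff[of s] DERIV_shift[of ?\<phi> "deriv ?\<phi> s" 0 s]
    by (simp add: DERIV_deriv_iff_real_differentiable)
  moreover have "(\<lambda>t. ?\<phi> (t + s)) = (\<lambda>t. f (y + s *\<^sub>R axis j 1 + t *\<^sub>R axis j 1))"
    by (simp add: scaleR_add_left algebra_simps)
  ultimately show "deriv ?\<phi> s = partial_deriv f j (y + s *\<^sub>R axis j 1)"
    unfolding partial_deriv_def using DERIV_imp_deriv by metis
qed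

lemma abs_diff_along_axis_less:
  fixes f :: "real^'d \<Rightarrow> real"
  assumes diff: "\<And>y. f differentiable (at y)"
    and bound: "\<And>y. \<bar>partial_deriv f j y\<bar> < C"
    and "t \<noteq> 0"
  shows "\<bar>f (y + t *\<^sub>R axis j 1) - f y\<bar> < C * \<bar>t\<bar>"
  using abs_diff_less_of_abs_deriv_less[of "\<lambda>s. f (y + s *\<^sub>R axis j 1)" C 0 t]
    deriv_along_axis[OF diff] bound \<open>t \<noteq> 0\<close> by simp

lemma hadamard_diff_axis:
  "(g - c *\<^sub>R axis j 1) \<odot> x = g \<odot> x - (c * x $ j) *\<^sub>R (axis j 1 :: real^'d)"
  by (simp add: vec_eq_iff hadamard_def axis_def left_diff_distrib)

lemma inner_axis_left: "axis j 1 \<bullet> (y :: real^'d) = y $ j"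
  by (metis cart_eq_inner_axis inner_commute)

lemma MIND_summand_drop_feature:
  fixes f :: "real^'d \<Rightarrow> real" and g x :: "real^'d"
  assumes diff: "\<And>y. f differentiable (at y)"
    and bound: "\<And>y. \<bar>partial_deriv f j y\<bar> < C"
    and "a > 0"
  defines "g' \<equiv> g - a *\<^sub>R axis j 1"
  shows "\<bar>f x - f (g' \<odot> x)\<bar> + lam * ((g' \<odot> x) \<bullet> x) + a * (lam * (x $ j)\<^sup>2 - C * \<bar>x $ j\<bar>)
           \<le> \<bar>f x - f (g \<odot> x)\<bar> + lam * ((g \<odot> x) \<bullet> x)" (is "?lhs \<le> ?rhs")
    and "x $ j \<noteq> 0 \<Longrightarrow>
      \<bar>f x - f (g' \<odot> x)\<bar> + lam * ((g' \<odot> x) \<bullet> x) + a * (lam * (x $ j)\<^sup>2 - C * \<bar>x $ j\<bar>)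
           < \<bar>f x - f (g \<odot> x)\<bar> + lam * ((g \<odot> x) \<bullet> x)"
proof -
  have split: "g \<odot> x = g' \<odot> x + (a * x $ j) *\<^sub>R axis j 1"
    by (simp add: g'_def hadamard_diff_axis)
  have reg: "(g \<odot> x) \<bullet> x = (g' \<odot> x) \<bullet> x + a * (x $ j)\<^sup>2"
    by (simp add: split inner_add_left inner_axis_left power2_eq_square)
  have pred_less: "\<bar>f (g \<odot> x) - f (g' \<odot> x)\<bar> < C * a * \<bar>x $ j\<bar>" if "x $ j \<noteq> 0"
    using abs_diff_along_axis_less[OF diff bound, of "a * x $ j" "g' \<odot> x"] \<open>a > 0\<close> that
    by (simp add: split abs_mult mult.assoc)
  have pred_le: "\<bar>f (g \<odot> x) - f (g' \<odot> x)\<bar> \<le> C * a * \<bar>x $ j\<bar>"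
    using pred_less by (cases "x $ j = 0") (auto simp: split less_imp_le)
  have triangle: "\<bar>f x - f (g' \<odot> x)\<bar> \<le> \<bar>f x - f (g \<odot> x)\<bar> + \<bar>f (g \<odot> x) - f (g' \<odot> x)\<bar>"
    by linarith
  show "?lhs \<le> ?rhs" using triangle pred_le by (simp add: reg algebra_simps)
  show "?lhs < ?rhs" if "x $ j \<noteq> 0"
    using triangle pred_less[OF that] by (simp add: reg algebra_simps)
qed

lemma MIND_loss_drop_feature_less:
  fixes f :: "real^'d \<Rightarrow> real" and x :: "nat \<Rightarrow> real^'d"
  assumes diff: "\<And>y. f differentiable (at y)"
    and bound: "\<And>y. \<bar>partial_deriv f j y\<bar> < C"
    and nz: "(\<Sum>i=1..n. (x i $ j)\<^sup>2) > 0"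
    and lam: "lam \<ge> C * (\<Sum>i=1..n. \<bar>x i $ j\<bar>) / (\<Sum>i=1..n. (x i $ j)\<^sup>2)"
    and "g $ j > 0"
  shows "MIND_loss f lam n x (g - (g $ j) *\<^sub>R axis j 1) < MIND_loss f lam n x g"
proof -
  define a where "a = g $ j"
  define g' where "g' = g - a *\<^sub>R axis j 1"
  define T where "T h i = \<bar>f (x i) - f (h \<odot> x i)\<bar> + lam * ((h \<odot> x i) \<bullet> x i)" for h i
  define D where "D i = a * (lam * (x i $ j)\<^sup>2 - C * \<bar>x i $ j\<bar>)" for i
  have "a > 0" using \<open>g $ j > 0\<close> by (simp add: a_def)
  obtain i0 where i0: "i0 \<in> {1..n}" "x i0 $ j \<noteq> 0"
    using nz by (metis (mono_tags, lifting) power_zero_numeral sum.neutral less_irrefl)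
  have "(\<Sum>i=1..n. T g' i + D i) < (\<Sum>i=1..n. T g i)"
    using MIND_summand_drop_feature[OF diff bound \<open>a > 0\<close>] i0
    by (intro sum_strict_mono_ex1) (auto simp: T_def D_def g'_def intro!: bexI[of _ i0])
  moreover have "(\<Sum>i=1..n. D i) \<ge> 0"
  proof -
    have "C * (\<Sum>i=1..n. \<bar>x i $ j\<bar>) \<le> lam * (\<Sum>i=1..n. (x i $ j)\<^sup>2)"
      using lam nz by (simp add: divide_le_eq)
    moreover have "(\<Sum>i=1..n. D i) = a * (lam * (\<Sum>i=1..n. (x i $ j)\<^sup>2) - C * (\<Sum>i=1..n. \<bar>x i $ j\<bar>))"
      by (simp add: D_def sum_distrib_left sum_subtractf algebra_simps)
    ultimately show ?thesis using \<open>a > 0\<close> by simp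
  qed
  ultimately have "(\<Sum>i=1..n. T g' i) < (\<Sum>i=1..n. T g i)"
    by (simp add: sum.distrib)
  moreover have "n > 0" using i0 by auto
  ultimately show ?thesis
    by (simp add: MIND_loss_def T_def g'_def a_def divide_strict_right_mono)
qed

theorem theorem1:
  fixes f :: "real^'d \<Rightarrow> real"
    and x :: "nat \<Rightarrow> real^'d"
    and n :: nat and j :: 'd and C lam :: real and gstar :: "real^'d"
  assumes diff: "\<And>y. f differentiable (at y)"
    and nz: "(\<Sum>i=1..n. (x i $ j)\<^sup>2) > 0"
    and Cpos: "C > 0"
    and weak_inv: "\<And>y. \<bar>partial_deriv f j y\<bar> < C"
    and lam_pos: "lam > 0"
    and lam: "lam \<ge> C * (\<Sum>i=1..n. \<bar>x i $ j\<bar>) / (\<Sum>i=1..n. (x i $ j)\<^sup>2)"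
    and gstar_in: "gstar \<in> unit_cube"
    and gstar_min: "\<forall>g \<in> unit_cube. MIND_loss f lam n x gstar \<le> MIND_loss f lam n x g"
  shows "gstar $ j = 0"
proof (rule ccontr)
  assume "gstar $ j \<noteq> 0"
  with gstar_in have pos: "gstar $ j > 0" by (auto simp: unit_cube_def less_le)
  define g' where "g' = gstar - (gstar $ j) *\<^sub>R axis j 1"
  have "g' \<in> unit_cube"
    using gstar_in by (auto simp: unit_cube_def g'_def axis_def)
  moreover have "MIND_loss f lam n x g' < MIND_loss f lam n x gstar"
    unfolding g'_def using MIND_loss_drop_feature_less[OF diff weak_inv nz lam pos] .
  ultimately show False using gstar_min by fastforce
qed

end
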